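(* Let $t_0>0$ and let $\{\sigma_t\}_{0<t<t_0}$ be a family of positive semidefinite $2\times 2$ complex matrices, written in a fixed orthonormal basis $\{\ket0,\ket1\}$ of $\mathbb C^2$ as $$\sigma_t=\begin{pmatrix} a_t & b_t\\ \bar b_t & d_t\end{pmatrix},$$ with $\operatorname{tr}\sigma_t>0$ and such that the normalized states $\sigma_t/\operatorname{tr}\sigma_t$ converge to the pure state $\ket0\bra0$ as $t\to0$. Suppose there exist constants $l>0$ and $c<\infty$ such that $|b_t|\ge l t$ and $d_t\le c t^2$ for all sufficiently small $t>0$. Then there is no representation $$\sigma_t=\int_\Lambda f_t(\lambda)\,\tau_\lambda\,d\mu(\lambda)\qquad\text{for all } 0<t<t_0,$$ where $\mu$ is a finite (positive) measure on a measurable space $\Lambda$ not depending on $t$, $\lambda\mapsto\tau_\lambda$ is a measurable map into the set of $2\times2$ density matrices (qubit states), and, for each $t$, $f_t:\Lambda\to[0,1]$ is measurable. In particular, any projective assemblage containing such a family of unnormalized conditional states admits no local hidden state model with a finite hidden-state measure.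
   Context: A local hidden state (LHS) model for an assemblage of unnormalized conditional states $\sigma_{a|M}$ on a trusted qubit is a representation $\sigma_{a|M}=\int_\Lambda p(a|M,\lambda)\tau_\lambda\,d\mu(\lambda)$ with $\mu$ a finite measure (e.g. a probability measure), $\tau_\lambda$ density matrices, and response functions $p(a|M,\lambda)\in[0,1]$ summing to one over outcomes $a$. *)

theory Defs
  imports "HOL-Analysis.Analysis"
begin

text \<open>2x2 complex matrices in the fixed basis |0>,|1>; index 1 of type 2 is |0>, index 2 is |1>.\<close>
type_synonym cmat2 = "complex^2^2"

definition psd :: "cmat2 \<Rightarrow> bool" where
  "psd A \<longleftrightarrow> (\<forall>v::complex^2.
      (\<Sum>i\<in>UNIV. cnj (v$i) * (A *v v)$i) \<in> \<real> \<and>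
      0 \<le> Re (\<Sum>i\<in>UNIV. cnj (v$i) * (A *v v)$i))"

definition density_matrix :: "cmat2 \<Rightarrow> bool" where
  "density_matrix A \<longleftrightarrow> psd A \<and> trace A = 1"

definition ket0bra0 :: cmat2 where
  "ket0bra0 = (\<chi> i j. if i = 1 \<and> j = 1 then 1 else 0)"

end

theory Submission
  imports Defs
begin

text \<open>For a qubit state \<open>\<tau>\<close> one has \<open>|\<tau>\<^sub>0\<^sub>1|\<^sup>2 \<le> \<tau>\<^sub>1\<^sub>1 =: s\<close>. Split \<open>\<Lambda>\<close> according to
  whether \<open>0 < s < d\<close>: there AM-GM gives \<open>\<surd>s \<le> a + s/(4a)\<close>, elsewhere \<open>\<surd>s \<le> s/\<surd>d\<close>. Integrating
  against \<open>f\<^sub>t d\<mu>\<close> yields \<open>|b\<^sub>t| \<le> a \<mu>{0 < s < d} + d\<^sub>t (1/(4a) + 1/\<surd>d)\<close>. Since \<open>\<mu>\<close> is finite and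
  does not depend on \<open>t\<close>, \<open>\<mu>{0 < s < d} \<rightarrow> 0\<close> as \<open>d \<rightarrow> 0\<close>; taking \<open>a\<close> proportional to \<open>t\<close>, the
  bounds \<open>|b\<^sub>t| \<ge> l t\<close> and \<open>d\<^sub>t \<le> c t\<^sup>2\<close> then make the right-hand side smaller than \<open>l t\<close> for
  small \<open>t\<close>.\<close>

lemma quadratic_form_cmat2:
  "(\<Sum>i\<in>UNIV. cnj (v$i) * ((A::cmat2) *v v)$i) =
     cnj (v$1) * (A$1$1 * v$1 + A$1$2 * v$2) + cnj (v$2) * (A$2$1 * v$1 + A$2$2 * v$2)"
  by (simp add: sum_2 matrix_vector_mult_def)

lemma psd_diag_nonneg:
  assumes "psd A"
  shows "Im (A$1$1) = 0" "0 \<le> Re (A$1$1)" "Im (A$2$2) = 0" "0 \<le> Re (A$2$2)"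
  using assms[unfolded psd_def, rule_format, of "vector [1,0]"]
    assms[unfolded psd_def, rule_format, of "vector [0,1]"]
  by (auto simp: quadratic_form_cmat2 complex_is_Real_iff)

lemma psd_hermitian:
  assumes "psd A"
  shows "A$2$1 = cnj (A$1$2)"
proof -
  have "Im (A$1$2) + Im (A$2$1) = 0"
    using assms[unfolded psd_def, rule_format, of "vector [1,1]"] psd_diag_nonneg[OF assms]
    by (auto simp: quadratic_form_cmat2 complex_is_Real_iff)
  moreover have "Re (A$1$2) = Re (A$2$1)"
    using assms[unfolded psd_def, rule_format, of "vector [1,\<i>]"] psd_diag_nonneg[OF assms]
    by (auto simp: quadratic_form_cmat2 complex_is_Real_iff)
  ultimately show ?thesis by (simp add: complex_eq_iff)
qed

lemma density_matrix_offdiag_sq_le: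
  assumes "density_matrix A"
  shows "(cmod (A$1$2))\<^sup>2 \<le> Re (A$2$2)"
proof -
  have psd: "psd A" and "A$1$1 + A$2$2 = 1"
    using assms by (auto simp: density_matrix_def trace_def sum_2)
  note diag = psd_diag_nonneg[OF psd]
  with \<open>A$1$1 + A$2$2 = 1\<close> have "Re (A$1$1) \<le> 1"
    by (metis add.commute le_add_same_cancel2 one_complex.simps(1) plus_complex.simps(1))
  \<comment> \<open>the quadratic form at v = (-A12, 1) equals A22 - (2 - A11) |A12|^2\<close>
  have "0 \<le> Re (A$2$2) - (cmod (A$1$2))\<^sup>2 * (2 - Re (A$1$1))"
    using psd[unfolded psd_def, rule_format, of "vector [- A$1$2, 1]"] diag
    unfolding quadratic_form_cmat2 psd_hermitian[OF psd] cmod_power2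
    by (simp add: algebra_simps power2_eq_square)
  moreover have "(cmod (A$1$2))\<^sup>2 \<le> (cmod (A$1$2))\<^sup>2 * (2 - Re (A$1$1))"
    using \<open>Re (A$1$1) \<le> 1\<close> by (simp add: mult_le_cancel_left1)
  ultimately show ?thesis by linarith
qed

lemma le_split_by_threshold:
  fixes q s a d :: real
  assumes "q\<^sup>2 \<le> s" "a > 0" "d > 0"
  shows "q \<le> a * of_bool (0 < s \<and> s < d) + s * (1 / (4 * a) + 1 / sqrt d)"
proof -
  have "s \<ge> 0" using assms(1) by (meson order_trans zero_le_power2)
  have q_sqrt: "q \<le> sqrt s" using assms(1) real_le_rsqrt by blast
  consider "s = 0" | "0 < s" "s < d" | "d \<le> s" using \<open>s \<ge> 0\<close> by linarith
  then show ?thesis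
  proof cases
    case 1
    then show ?thesis using q_sqrt by simp
  next
    case 2
    \<comment> \<open>AM-GM: q \<le> a + q^2 / (4a)\<close>
    have "4 * a * q \<le> 4 * a * a + q\<^sup>2"
      using zero_le_power2[of "q - 2 * a"] by (simp add: power2_eq_square algebra_simps)
    then have "q \<le> a + s / (4 * a)"
      using assms by (simp add: field_simps)
    moreover have "0 \<le> s / sqrt d" using \<open>s \<ge> 0\<close> assms(3) by simp
    ultimately have "q \<le> a + s / (4 * a) + s / sqrt d" by linarith
    then show ?thesis using 2 by (simp add: algebra_simps)
  next
    case 3
    have "sqrt d * sqrt s \<le> sqrt s * sqrt s"
      using mult_right_mono[OF real_sqrt_le_mono[OF 3] real_sqrt_ge_zero[OF \<open>s \<ge> 0\<close>]] .
    then have "sqrt s \<le> s / sqrt d"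
      using assms(3) \<open>s \<ge> 0\<close> by (simp add: field_simps)
    moreover have "0 \<le> s / (4 * a)" using \<open>s \<ge> 0\<close> assms(2) by simp
    ultimately have "q \<le> s / (4 * a) + s / sqrt d" using q_sqrt by linarith
    then show ?thesis using 3 by (simp add: algebra_simps)
  qed
qed

lemma borel_measurable_Re_entry:
  fixes \<tau> :: "'a \<Rightarrow> cmat2"
  assumes "\<tau> \<in> borel_measurable M"
  shows "(\<lambda>x. Re (\<tau> x$i$j)) \<in> borel_measurable M"
proof -
  have "continuous_on UNIV (\<lambda>B::cmat2. Re (B$i$j))"
    by (intro continuous_intros)
  from measurable_compose[OF assms borel_measurable_continuous_onI[OF this]] show ?thesis
    by (simp add: o_def)
qed

lemma (in finite_measure) measure_small_positive_values:
  fixes s :: "'a \<Rightarrow> real"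
  assumes "s \<in> borel_measurable M" "e > 0"
  obtains d where "d > 0" "measure M {x\<in>space M. 0 < s x \<and> s x < d} < e"
proof -
  define A where "A n = {x\<in>space M. 0 < s x \<and> s x < inverse (real (Suc n))}" for n
  have "range A \<subseteq> sets M" using assms(1) by (auto simp: A_def)
  moreover have "decseq A"
  proof (rule decseq_SucI)
    fix n
    have "inverse (real (Suc (Suc n))) \<le> inverse (real (Suc n))"
      using le_imp_inverse_le[of "real (Suc n)" "real (Suc (Suc n))"] by simp
    then show "A (Suc n) \<subseteq> A n" unfolding A_def by (blast intro: order.strict_trans2)
  qed
  ultimately have "(\<lambda>n. measure M (A n)) \<longlonglongrightarrow> measure M (\<Inter>n. A n)"
    by (rule finite_Lim_measure_decseq)
  moreover have "(\<Inter>n. A n) = {}"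
  proof safe
    fix x assume "x \<in> (\<Inter>n. A n)"
    then have "0 < s x" by (auto simp: A_def)
    then obtain n where "inverse (real (Suc n)) < s x" using reals_Archimedean by blast
    moreover have "x \<in> A n" using \<open>x \<in> (\<Inter>n. A n)\<close> by blast
    ultimately show "x \<in> {}" by (simp add: A_def)
  qed
  ultimately have "(\<lambda>n. measure M (A n)) \<longlonglongrightarrow> 0" by simp
  from order_tendstoD(2)[OF this assms(2)] obtain n where "measure M (A n) < e"
    unfolding eventually_sequentially by blast
  then show ?thesis by (intro that[of "inverse (real (Suc n))"]) (simp_all add: A_def)
qed

lemma (in finite_measure) offdiag_le_of_integral_density_matrices:
  fixes \<tau> :: "'a \<Rightarrow> cmat2" and g :: "'a \<Rightarrow> real"
  assumes \<tau>_meas: "\<tau> \<in> borel_measurable M"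
    and \<tau>_dm: "\<And>x. x \<in> space M \<Longrightarrow> density_matrix (\<tau> x)"
    and g: "\<And>x. x \<in> space M \<Longrightarrow> 0 \<le> g x \<and> g x \<le> 1"
    and S: "has_bochner_integral M (\<lambda>x. g x *\<^sub>R \<tau> x) S"
    and "a > 0" "d > 0"
  shows "cmod (S$1$2) \<le> a * measure M {x\<in>space M. 0 < Re (\<tau> x$2$2) \<and> Re (\<tau> x$2$2) < d}
           + Re (S$2$2) * (1 / (4 * a) + 1 / sqrt d)"
proof -
  define s where "s x = Re (\<tau> x$2$2)" for x
  define A where "A = {x\<in>space M. 0 < s x \<and> s x < d}"
  define K where "K = 1 / (4 * a) + 1 / sqrt d"
  have entry12: "bounded_linear (\<lambda>B::cmat2. B$1$2)"
    and entry22: "bounded_linear (\<lambda>B::cmat2. Re (B$2$2))"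
    by (auto intro!: bounded_linear_compose[OF bounded_linear_Re] bounded_linear_compose[OF bounded_linear_vec_nth]
        simp: o_def)
  have "s \<in> borel_measurable M"
    unfolding s_def using \<tau>_meas by (rule borel_measurable_Re_entry)
  then have "A \<in> sets M" by (simp add: A_def)
  have S12: "has_bochner_integral M (\<lambda>x. (g x *\<^sub>R \<tau> x)$1$2) (S$1$2)"
    using has_bochner_integral_bounded_linear[OF entry12 S] .
  have S22: "has_bochner_integral M (\<lambda>x. g x * s x) (Re (S$2$2))"
    using has_bochner_integral_bounded_linear[OF entry22 S] by (simp add: s_def)
  define h where "h x = a * indicator A x + g x * s x * K" for x
  have h: "has_bochner_integral M h (a * measure M A + Re (S$2$2) * K)"
    unfolding h_def using \<open>A \<in> sets M\<close> S22
    by (intro has_bochner_integral_add has_bochner_integral_mult_left has_bochner_integral_mult_right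
        has_bochner_integral_real_indicator) (auto simp: emeasure_eq_measure)
  have "cmod (S$1$2) = norm (\<integral>x. (g x *\<^sub>R \<tau> x)$1$2 \<partial>M)"
    using S12 by (simp add: has_bochner_integral_integral_eq)
  also have "\<dots> \<le> (\<integral>x. norm ((g x *\<^sub>R \<tau> x)$1$2) \<partial>M)"
    by (rule integral_norm_bound)
  also have "\<dots> \<le> integral\<^sup>L M h"
  proof (rule integral_mono)
    show "integrable M (\<lambda>x. norm ((g x *\<^sub>R \<tau> x)$1$2))"
      using integrable_norm[OF integrable.intros[OF S12]] .
    show "integrable M h" using h by (rule integrable.intros)
    fix x assume x: "x \<in> space M"
    have "cmod (\<tau> x$1$2) \<le> a * of_bool (0 < s x \<and> s x < d) + s x * K"
      unfolding K_def s_def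
      using le_split_by_threshold[OF density_matrix_offdiag_sq_le[OF \<tau>_dm[OF x]] \<open>a > 0\<close> \<open>d > 0\<close>] .
    then have "g x * cmod (\<tau> x$1$2) \<le> g x * (a * of_bool (0 < s x \<and> s x < d)) + g x * s x * K"
      using g[OF x] by (metis distrib_left mult.assoc mult_left_mono)
    also have "\<dots> \<le> h x"
      using g[OF x] \<open>a > 0\<close> x by (auto simp: h_def A_def indicator_def)
    finally show "norm ((g x *\<^sub>R \<tau> x)$1$2) \<le> h x"
      using g[OF x] by simp
  qed
  also have "\<dots> = a * measure M A + Re (S$2$2) * K"
    using h by (rule has_bochner_integral_integral_eq)
  finally show ?thesis by (simp add: A_def K_def s_def)
qed

lemma (in finite_measure) no_bounded_weight_decomposition:
  fixes \<sigma> :: "real \<Rightarrow> cmat2" and \<tau> :: "'a \<Rightarrow> cmat2" and f :: "real \<Rightarrow> 'a \<Rightarrow> real"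
  assumes t0: "t0 > 0" and l: "l > 0"
    and bounds: "\<forall>\<^sub>F t in at_right 0. cmod (\<sigma> t$1$2) \<ge> l * t \<and> Re (\<sigma> t$2$2) \<le> c * t\<^sup>2"
    and \<tau>: "\<tau> \<in> borel_measurable M" "\<And>x. x \<in> space M \<Longrightarrow> density_matrix (\<tau> x)"
    and f: "\<And>t x. 0 < t \<Longrightarrow> t < t0 \<Longrightarrow> x \<in> space M \<Longrightarrow> 0 \<le> f t x \<and> f t x \<le> 1"
    and \<sigma>: "\<And>t. 0 < t \<Longrightarrow> t < t0 \<Longrightarrow> has_bochner_integral M (\<lambda>x. f t x *\<^sub>R \<tau> x) (\<sigma> t)"
  shows False
proof -
  define C where "C = \<bar>c\<bar> + 1"
  define \<beta> where "\<beta> = C / l"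
  have "C > 0" "\<beta> > 0" "l / (4 * \<beta>) > 0" using l by (auto simp: C_def \<beta>_def)
  obtain d where "d > 0" and
    small: "measure M {x\<in>space M. 0 < Re (\<tau> x$2$2) \<and> Re (\<tau> x$2$2) < d} < l / (4 * \<beta>)"
    (is "?\<mu> < _")
    using measure_small_positive_values[OF borel_measurable_Re_entry[OF \<tau>(1), of 2 2] \<open>l / (4 * \<beta>) > 0\<close>]
    by blast
  have "\<forall>\<^sub>F t in at_right 0. t \<in> {0<..<min t0 (l * sqrt d / (4 * C))}"
    using t0 l \<open>d > 0\<close> \<open>C > 0\<close> by (intro eventually_at_right_real) auto
  from eventually_happens[OF eventually_conj[OF bounds this]] obtain t where
    "0 < t" "t < t0" "t < l * sqrt d / (4 * C)"
    and lower: "l * t \<le> cmod (\<sigma> t$1$2)" and "Re (\<sigma> t$2$2) \<le> c * t\<^sup>2"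
    by auto
  moreover have "c * t\<^sup>2 \<le> C * t\<^sup>2" by (intro mult_right_mono) (auto simp: C_def)
  ultimately have upper: "Re (\<sigma> t$2$2) \<le> C * t\<^sup>2" by linarith
  \<comment> \<open>with \<open>a = \<beta> t\<close> the AM-GM term \<open>C t\<^sup>2 / (4 a)\<close> is exactly \<open>l t / 4\<close>\<close>
  let ?K = "1 / (4 * (\<beta> * t)) + 1 / sqrt d"
  have "\<beta> * t > 0" using \<open>\<beta> > 0\<close> \<open>0 < t\<close> by simp
  have "\<And>x. x \<in> space M \<Longrightarrow> 0 \<le> f t x \<and> f t x \<le> 1" using f \<open>0 < t\<close> \<open>t < t0\<close> by blast
  from offdiag_le_of_integral_density_matrices[OF \<tau> this \<sigma>[OF \<open>0 < t\<close> \<open>t < t0\<close>] \<open>\<beta> * t > 0\<close> \<open>d > 0\<close>]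
  have "l * t \<le> \<beta> * t * ?\<mu> + Re (\<sigma> t$2$2) * ?K"
    using lower by linarith
  also have "\<dots> \<le> \<beta> * t * ?\<mu> + C * t\<^sup>2 * ?K"
    using upper \<open>0 < t\<close> \<open>\<beta> > 0\<close> \<open>d > 0\<close> by (intro add_left_mono mult_right_mono) auto
  also have "\<dots> = t * (\<beta> * ?\<mu>) + l * t / 4 + t * (C * t / sqrt d)"
    using \<open>0 < t\<close> \<open>C > 0\<close> l by (simp add: \<beta>_def field_simps power2_eq_square)
  also have "\<dots> < t * (l / 4) + l * t / 4 + t * (l / 4)"
    using small \<open>t < l * sqrt d / (4 * C)\<close> \<open>0 < t\<close> \<open>\<beta> > 0\<close> \<open>C > 0\<close> \<open>d > 0\<close>
    by (intro add_strict_right_mono add_strict_mono mult_strict_left_mono) (auto simp: field_simps)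
  finally show False using l \<open>0 < t\<close> by simp
qed

theorem mainTheorem1:
  fixes \<sigma> :: "real \<Rightarrow> cmat2" and t0 l c :: real
  assumes t0: "t0 > 0"
    and psd: "\<And>t. 0 < t \<Longrightarrow> t < t0 \<Longrightarrow> psd (\<sigma> t)"
    and tr_pos: "\<And>t. 0 < t \<Longrightarrow> t < t0 \<Longrightarrow> Re (trace (\<sigma> t)) > 0"
    and conv: "((\<lambda>t. (1 / Re (trace (\<sigma> t))) *\<^sub>R \<sigma> t) \<longlongrightarrow> ket0bra0) (at_right 0)"
    and l: "l > 0" and bounds:
      "\<forall>\<^sub>F t in at_right 0. cmod (\<sigma> t $ 1 $ 2) \<ge> l * t \<and> Re (\<sigma> t $ 2 $ 2) \<le> c * t\<^sup>2"
  shows "\<not> (\<exists>(M :: 'a measure) (\<tau> :: 'a \<Rightarrow> cmat2) (f :: real \<Rightarrow> 'a \<Rightarrow> real).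
            finite_measure M \<and>
            \<tau> \<in> borel_measurable M \<and> (\<forall>x\<in>space M. density_matrix (\<tau> x)) \<and>
            (\<forall>t. 0 < t \<and> t < t0 \<longrightarrow>
               f t \<in> borel_measurable M \<and> (\<forall>x\<in>space M. 0 \<le> f t x \<and> f t x \<le> 1) \<and>
               has_bochner_integral M (\<lambda>x. f t x *\<^sub>R \<tau> x) (\<sigma> t)))"
  using finite_measure.no_bounded_weight_decomposition[OF _ t0 l bounds] by blast

end
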